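(* Let $k\ge 0$ be an integer and let $G$ be a graph with $m$ edges, where $m\ge\max\{(k^2+2k+2)^2+k+1,\,(2k+3)^2+k+1\}$. If $\rho(G)\ge\sqrt{m-k}$, then $G$ contains $K_{1,m-k}$ as a subgraph or $G$ contains $C_4$ as a subgraph.
   Context: All graphs are finite, simple and undirected. $\rho(G)$ denotes the spectral radius (largest eigenvalue) of the adjacency matrix $A(G)$ of $G$. $K_{1,t}$ denotes the star with $t$ edges (on $t+1$ vertices) and $C_4$ the cycle on $4$ vertices. "Contains as a subgraph" means not necessarily induced. *)

theory Defs
  imports "HOL-Analysis.Analysis"
begin

definition simple_graph :: "('a::finite \<Rightarrow> 'a \<Rightarrow> bool) \<Rightarrow> bool" where
  "simple_graph E \<longleftrightarrow> (\<forall>u v. E u v \<longrightarrow> E v u) \<and> (\<forall>v. \<not> E v v)"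

definition edges :: "('a \<Rightarrow> 'a \<Rightarrow> bool) \<Rightarrow> 'a set set" where
  "edges E = {{u, v} | u v. E u v}"

definition num_edges :: "('a \<Rightarrow> 'a \<Rightarrow> bool) \<Rightarrow> nat" where
  "num_edges E = card (edges E)"

definition adj_matrix :: "('a::finite \<Rightarrow> 'a \<Rightarrow> bool) \<Rightarrow> real^'a^'a" where
  "adj_matrix E = (\<chi> i j. if E i j then 1 else 0)"

definition is_eigenvalue :: "real^'n^'n \<Rightarrow> real \<Rightarrow> bool" where
  "is_eigenvalue A l \<longleftrightarrow> (\<exists>x. x \<noteq> 0 \<and> A *v x = l *\<^sub>R x)"

definition spectral_radius_graph :: "('a::finite \<Rightarrow> 'a \<Rightarrow> bool) \<Rightarrow> real" where
  "spectral_radius_graph E = Max {l. is_eigenvalue (adj_matrix E) l}"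

definition contains_star :: "('a \<Rightarrow> 'a \<Rightarrow> bool) \<Rightarrow> nat \<Rightarrow> bool" where
  "contains_star E t \<longleftrightarrow> (\<exists>c S. finite S \<and> card S = t \<and> c \<notin> S \<and> (\<forall>v\<in>S. E c v))"

definition contains_C4 :: "('a \<Rightarrow> 'a \<Rightarrow> bool) \<Rightarrow> bool" where
  "contains_C4 E \<longleftrightarrow> (\<exists>a b c d. distinct [a, b, c, d] \<and> E a b \<and> E b c \<and> E c d \<and> E d a)"

end

theory Submission
  imports Defs
begin

(* For an eigenvector x of the spectral radius L, the vector y = |x| satisfies
   L y_v <= sum of y over the neighbours of v.  Let u maximise y, let d be its degree and W the
   set of vertices other than u sharing a neighbour with u.  Without a C4 every vertex other
   than u has at most one neighbour in N(u), so L^2 y_u <= d y_u + sum_W y; applying the same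
   estimate to W and counting the darts avoiding u gives (L - 1) sum_W y <= 2 (m - d) y_u.
   Hence (L - 1)(L^2 - d) <= 2 (m - d).  Without a star K_{1,m-k} we have d <= m - k - 1, and
   together with L^2 >= m - k this forces L <= 2k + 3, contradicting m >= (2k + 3)^2 + k + 1. *)

lemma symmetric_matrix_inner_commute:
  fixes A :: "real^'n^'n"
  assumes "transpose A = A"
  shows "inner x (A *v y) = inner (A *v x) y"
  by (metis assms dot_lmul_matrix transpose_matrix_vector)

lemma nonneg_quadratic_imp_linear_coeff_zero:
  fixes a c :: real
  assumes nonneg: "\<And>t. 0 \<le> a * t + c * t^2"
  shows "a = 0"
proof (rule ccontr)
  assume "a \<noteq> 0"
  define s where "s = \<bar>c\<bar> + 1"
  have "s > 0" "c - s < 0" by (auto simp: s_def)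
  have "a * (- a / s) + c * (- a / s)^2 = (a / s)^2 * (c - s)"
    using \<open>s > 0\<close> by (simp add: field_simps power2_eq_square)
  also have "\<dots> < 0"
    using \<open>a \<noteq> 0\<close> \<open>s > 0\<close> \<open>c - s < 0\<close> by (simp add: mult_pos_neg)
  finally show False using nonneg[of "- a / s"] by linarith
qed

lemma symmetric_matrix_has_eigenvalue:
  fixes A :: "real^'n^'n"
  assumes sym: "transpose A = A"
  shows "\<exists>l. is_eigenvalue A l"
proof -
  define q where "q z = inner z (A *v z)" for z :: "real^'n"
  have "continuous_on (sphere 0 1) q"
    unfolding q_def by (intro continuous_intros linear_continuous_on matrix_vector_mul_linear)
  moreover have "sphere (0::real^'n) 1 \<noteq> {}" by simp
  ultimately obtain x where x: "x \<in> sphere 0 1" and x_max: "\<And>z. z \<in> sphere 0 1 \<Longrightarrow> q z \<le> q x"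
    using continuous_attains_sup[OF compact_sphere] by blast
  define \<mu> where "\<mu> = q x"
  have rayleigh: "q z \<le> \<mu> * inner z z" for z
  proof (cases "z = 0")
    case False
    then have "q (z /\<^sub>R norm z) \<le> \<mu>" using x_max by (simp add: \<mu>_def)
    then show ?thesis
      using False by (simp add: q_def matrix_vector_mult_scaleR field_simps power2_eq_square
          flip: power2_norm_eq_inner)
  qed (simp add: q_def)
  define b where "b = A *v x - \<mu> *\<^sub>R x"
  have "inner x x = 1" using x by (simp flip: power2_norm_eq_inner)
  \<comment> \<open>Along the line through x in direction b the Rayleigh bound is a quadratic in t that is
      nonnegative and vanishes at 0, so its linear coefficient -2|b|^2 vanishes.\<close>
  have "0 \<le> (- 2 * inner b b) * t + (\<mu> * inner b b - q b) * t^2" for t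
  proof -
    have "inner x (A *v b) = inner (A *v x) b" by (rule symmetric_matrix_inner_commute[OF sym])
    then have "\<mu> * inner (x + t *\<^sub>R b) (x + t *\<^sub>R b) - q (x + t *\<^sub>R b)
        = (- 2 * inner b b) * t + (\<mu> * inner b b - q b) * t^2"
      using \<open>inner x x = 1\<close>
      by (simp add: q_def \<mu>_def b_def algebra_simps inner_commute power2_eq_square)
    then show ?thesis using rayleigh[of "x + t *\<^sub>R b"] by linarith
  qed
  then have "b = 0" using nonneg_quadratic_imp_linear_coeff_zero by fastforce
  moreover have "x \<noteq> 0" using x by auto
  ultimately show ?thesis unfolding is_eigenvalue_def b_def by auto
qed

lemma finite_eigenvalues_symmetric_matrix:
  fixes A :: "real^'n^'n"
  assumes sym: "transpose A = A"
  shows "finite {l. is_eigenvalue A l}"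
proof -
  define S where "S = {l. is_eigenvalue A l}"
  define v where "v l = (SOME x. x \<noteq> 0 \<and> A *v x = l *\<^sub>R x)" for l
  have v: "v l \<noteq> 0" "A *v v l = l *\<^sub>R v l" if "l \<in> S" for l
    using that someI_ex[of "\<lambda>x. x \<noteq> 0 \<and> A *v x = l *\<^sub>R x"]
    unfolding S_def is_eigenvalue_def v_def by blast+
  have "inj_on v S"
    by (rule inj_onI) (metis v scaleR_cancel_right)
  have "orthogonal (v l) (v l')" if "l \<in> S" "l' \<in> S" "l \<noteq> l'" for l l'
  proof -
    have "inner (v l) (A *v v l') = inner (A *v v l) (v l')"
      by (rule symmetric_matrix_inner_commute[OF sym])
    then have "l' * inner (v l) (v l') = l * inner (v l) (v l')"
      using v that by simp
    then show ?thesis using that by (simp add: orthogonal_def)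
  qed
  then have "pairwise orthogonal (v ` S)"
    by (auto simp: pairwise_def)
  moreover have "0 \<notin> v ` S" using v by auto
  ultimately have "finite (v ` S)"
    using pairwise_orthogonal_independent independent_imp_finite by blast
  then show ?thesis
    using \<open>inj_on v S\<close> finite_imageD S_def by blast
qed

abbreviation nbrs :: "('a \<Rightarrow> 'a \<Rightarrow> bool) \<Rightarrow> 'a \<Rightarrow> 'a set" where
  "nbrs E v \<equiv> {w. E v w}"

lemma simple_graph_sym: "simple_graph E \<Longrightarrow> E u v \<Longrightarrow> E v u"
  and simple_graph_irrefl: "simple_graph E \<Longrightarrow> \<not> E v v"
  by (auto simp: simple_graph_def)

lemma transpose_adj_matrix: "simple_graph E \<Longrightarrow> transpose (adj_matrix E) = adj_matrix E"
  by (auto simp: transpose_def adj_matrix_def vec_eq_iff dest: simple_graph_sym)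

lemma spectral_radius_graph_is_eigenvalue:
  assumes "simple_graph E"
  shows "is_eigenvalue (adj_matrix E) (spectral_radius_graph E)"
proof -
  have sym: "transpose (adj_matrix E) = adj_matrix E" using assms by (rule transpose_adj_matrix)
  show ?thesis
    unfolding spectral_radius_graph_def
    using Max_in[OF finite_eigenvalues_symmetric_matrix[OF sym]] symmetric_matrix_has_eigenvalue[OF sym]
    by blast
qed

lemma adj_matrix_mult_vec_nth: "(adj_matrix E *v x) $ v = (\<Sum>w\<in>nbrs E v. x $ w)"
proof -
  have "(adj_matrix E *v x) $ v = (\<Sum>w\<in>UNIV. if E v w then x $ w else 0)"
    by (simp add: adj_matrix_def matrix_vector_mult_def if_distrib[of "\<lambda>a. a * _"] cong: if_cong)
  then show ?thesis
    by (simp add: sum.If_cases)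
qed

lemma eigenvector_abs_le_nbrs_sum:
  assumes "adj_matrix E *v x = L *\<^sub>R x" and "L \<ge> 0"
  shows "L * \<bar>x $ v\<bar> \<le> (\<Sum>w\<in>nbrs E v. \<bar>x $ w\<bar>)"
proof -
  have "L * x $ v = (\<Sum>w\<in>nbrs E v. x $ w)"
    using arg_cong[OF assms(1), of "\<lambda>z. z $ v"] by (simp add: adj_matrix_mult_vec_nth)
  then have "L * \<bar>x $ v\<bar> = \<bar>\<Sum>w\<in>nbrs E v. x $ w\<bar>"
    using assms(2) by (metis abs_mult abs_of_nonneg)
  then show ?thesis by (simp add: sum_abs)
qed

lemma card_nbrs_lt_if_no_star:
  assumes "simple_graph E" and "\<not> contains_star E t"
  shows "card (nbrs E u) < t"
proof (rule ccontr)
  assume "\<not> card (nbrs E u) < t"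
  then obtain S where "S \<subseteq> nbrs E u" "card S = t" "finite S"
    by (metis not_less obtain_subset_with_card_n)
  moreover have "u \<notin> S" using \<open>S \<subseteq> nbrs E u\<close> simple_graph_irrefl[OF assms(1)] by auto
  ultimately show False using assms(2) unfolding contains_star_def by blast
qed

abbreviation sharing_nbr :: "('a \<Rightarrow> 'a \<Rightarrow> bool) \<Rightarrow> 'a \<Rightarrow> 'a set" where
  "sharing_nbr E u \<equiv> {w. w \<noteq> u \<and> (\<exists>v. E u v \<and> E w v)}"

abbreviation darts_avoiding :: "('a \<Rightarrow> 'a \<Rightarrow> bool) \<Rightarrow> 'a \<Rightarrow> ('a \<times> 'a) set" where
  "darts_avoiding E u \<equiv> {(v, w). E v w \<and> v \<noteq> u \<and> w \<noteq> u}"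

lemma sum_nbrs_sums_le:
  fixes E :: "'a::finite \<Rightarrow> 'a \<Rightarrow> bool" and y :: "'a \<Rightarrow> real"
  assumes sg: "simple_graph E" and nc: "\<not> contains_C4 E"
    and y_nonneg: "\<And>v. 0 \<le> y v" and T: "T \<subseteq> nbrs E u"
  shows "(\<Sum>w\<in>T. \<Sum>z\<in>nbrs E w. y z) \<le> card T * y u + (\<Sum>z\<in>sharing_nbr E u. y z)"
proof -
  define P where "P = (SIGMA w:T. nbrs E w - {u})"
  have "(\<Sum>z\<in>nbrs E w. y z) = y u + (\<Sum>z\<in>nbrs E w - {u}. y z)" if "w \<in> T" for w
    using that T by (subst sum.remove[of _ u]) (auto intro: simple_graph_sym[OF sg])
  then have split: "(\<Sum>w\<in>T. \<Sum>z\<in>nbrs E w. y z) = card T * y u + (\<Sum>(w, z)\<in>P. y z)"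
    by (simp add: sum.distrib sum.Sigma P_def)
  \<comment> \<open>Two distinct neighbours of u with a further common neighbour z would span a C4.\<close>
  have "inj_on snd P"
  proof (rule inj_onI)
    fix p p' assume "p \<in> P" "p' \<in> P" "snd p = snd p'"
    then obtain w w' z where "p = (w, z)" "p' = (w', z)" "w \<in> T" "w' \<in> T"
      and "E w z" "E w' z" "z \<noteq> u"
      unfolding P_def by (cases p, cases p') auto
    moreover have "E u w" "E u w'" using T \<open>w \<in> T\<close> \<open>w' \<in> T\<close> by auto
    moreover have "\<not> distinct [u, w, z, w']"
      using nc \<open>E u w\<close> \<open>E w z\<close> \<open>E w' z\<close> \<open>E u w'\<close> simple_graph_sym[OF sg]
      unfolding contains_C4_def by blast
    ultimately show "p = p'"
      using simple_graph_irrefl[OF sg] by auto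
  qed
  then have "(\<Sum>(w, z)\<in>P. y z) = (\<Sum>z\<in>snd ` P. y z)"
    by (simp add: sum.reindex case_prod_beta')
  also have "\<dots> \<le> (\<Sum>z\<in>sharing_nbr E u. y z)"
    using T simple_graph_sym[OF sg] by (intro sum_mono2 y_nonneg) (auto simp: P_def)
  finally show ?thesis
    using split by simp
qed

lemma card_le_twice_card_doubleton_image:
  fixes D :: "('a \<times> 'a) set"
  assumes "finite D"
  shows "card D \<le> 2 * card ((\<lambda>(a, b). {a, b}) ` D)"
proof -
  let ?F = "(\<lambda>(a, b). {a, b}) ` D"
  have "inj_on (\<lambda>(a, b). ({a, b}, a)) D"
    by (auto simp: inj_on_def doubleton_eq_iff)
  then have "card D = card ((\<lambda>(a, b). ({a, b}, a)) ` D)"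
    by (simp add: card_image)
  also have "\<dots> \<le> card (SIGMA e:?F. e)"
    using assms by (intro card_mono) auto
  also have "\<dots> = (\<Sum>e\<in>?F. card e)"
    using assms by (intro card_SigmaI) auto
  also have "\<dots> \<le> (\<Sum>e\<in>?F. 2)"
    by (intro sum_mono) (auto simp: card_insert_if)
  finally show ?thesis by simp
qed

lemma card_edges_containing:
  assumes "simple_graph E"
  shows "card {e \<in> edges E. u \<in> e} = card (nbrs E u)"
proof -
  have "{e \<in> edges E. u \<in> e} = (\<lambda>w. {u, w}) ` nbrs E u"
    using simple_graph_sym[OF assms] by (auto simp: edges_def insert_commute)
  moreover have "inj_on (\<lambda>w. {u, w}) (nbrs E u)"
    by (auto simp: inj_on_def doubleton_eq_iff)
  ultimately show ?thesis by (simp add: card_image)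
qed

lemma card_darts_avoiding_le:
  fixes E :: "'a::finite \<Rightarrow> 'a \<Rightarrow> bool"
  assumes "simple_graph E"
  shows "card (darts_avoiding E u) + 2 * card (nbrs E u) \<le> 2 * num_edges E"
proof -
  let ?Eu = "{e \<in> edges E. u \<in> e}"
  have "(\<lambda>(a, b). {a, b}) ` darts_avoiding E u \<subseteq> edges E - ?Eu"
    by (auto simp: edges_def)
  then have "card ((\<lambda>(a, b). {a, b}) ` darts_avoiding E u) \<le> card (edges E - ?Eu)"
    by (intro card_mono) auto
  also have "\<dots> = num_edges E - card (nbrs E u)"
    by (simp add: card_Diff_subset num_edges_def card_edges_containing[OF assms, symmetric])
  finally have "card (darts_avoiding E u) \<le> 2 * (num_edges E - card (nbrs E u))"
    using card_le_twice_card_doubleton_image[of "darts_avoiding E u"] by simp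
  moreover have "card (nbrs E u) \<le> num_edges E"
    unfolding num_edges_def card_edges_containing[OF assms, symmetric] by (intro card_mono) auto
  ultimately show ?thesis by linarith
qed

lemma card_sharing_nbr_le_card_darts_avoiding:
  fixes E :: "'a::finite \<Rightarrow> 'a \<Rightarrow> bool"
  assumes sg: "simple_graph E"
  shows "card (sharing_nbr E u \<inter> nbrs E u) + (\<Sum>w\<in>sharing_nbr E u - nbrs E u. card (nbrs E w))
    \<le> card (darts_avoiding E u)"
proof -
  let ?N1 = "sharing_nbr E u \<inter> nbrs E u" and ?R1 = "sharing_nbr E u - nbrs E u"
  define X1 where "X1 = (SIGMA w:?N1. nbrs E w \<inter> nbrs E u)"
  define X2 where "X2 = (SIGMA w:?R1. nbrs E w)"
  have "?N1 \<subseteq> fst ` X1"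
    using simple_graph_sym[OF sg] by (auto simp: X1_def image_iff)
  then have "card ?N1 \<le> card (fst ` X1)"
    by (intro card_mono) auto
  also have "\<dots> \<le> card X1"
    by (intro card_image_le) auto
  finally have "card ?N1 \<le> card X1" .
  moreover have "card X2 = (\<Sum>w\<in>?R1. card (nbrs E w))"
    unfolding X2_def by (intro card_SigmaI) auto
  moreover have "card X1 + card X2 = card (X1 \<union> X2)"
    by (intro card_Un_disjoint[symmetric]) (auto simp: X1_def X2_def)
  moreover have "card (X1 \<union> X2) \<le> card (darts_avoiding E u)"
    using simple_graph_sym[OF sg] simple_graph_irrefl[OF sg]
    by (intro card_mono) (auto simp: X1_def X2_def)
  ultimately show ?thesis by linarith
qed

lemma sum_sharing_nbr_le:
  fixes E :: "'a::finite \<Rightarrow> 'a \<Rightarrow> bool" and y :: "'a \<Rightarrow> real"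
  assumes sg: "simple_graph E" and nc: "\<not> contains_C4 E"
    and y_nonneg: "\<And>v. 0 \<le> y v" and y_max: "\<And>v. y v \<le> y u"
    and sub_eigen: "\<And>v. L * y v \<le> (\<Sum>w\<in>nbrs E v. y w)"
  shows "(L - 1) * (\<Sum>z\<in>sharing_nbr E u. y z)
    \<le> 2 * (real (num_edges E) - card (nbrs E u)) * y u"
proof -
  let ?W = "sharing_nbr E u"
  let ?N1 = "?W \<inter> nbrs E u" and ?R1 = "?W - nbrs E u"
  have "L * (\<Sum>v\<in>?N1. y v) \<le> (\<Sum>v\<in>?N1. \<Sum>z\<in>nbrs E v. y z)"
    by (simp add: sum_distrib_left sum_mono sub_eigen)
  also have "\<dots> \<le> card ?N1 * y u + (\<Sum>z\<in>?W. y z)"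
    by (intro sum_nbrs_sums_le sg nc y_nonneg) auto
  finally have inner: "L * (\<Sum>v\<in>?N1. y v) \<le> card ?N1 * y u + (\<Sum>z\<in>?W. y z)" .
  have "L * (\<Sum>v\<in>?R1. y v) \<le> (\<Sum>v\<in>?R1. \<Sum>z\<in>nbrs E v. y z)"
    by (simp add: sum_distrib_left sum_mono sub_eigen)
  also have "\<dots> \<le> (\<Sum>v\<in>?R1. card (nbrs E v) * y u)"
    by (intro sum_mono) (simp add: sum_bounded_above y_max)
  finally have outer: "L * (\<Sum>v\<in>?R1. y v) \<le> (\<Sum>v\<in>?R1. card (nbrs E v)) * y u"
    by (simp add: sum_distrib_right)
  have "(\<Sum>z\<in>?W. y z) = (\<Sum>v\<in>?N1. y v) + (\<Sum>v\<in>?R1. y v)"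
    by (simp add: sum.Int_Diff)
  then have "(L - 1) * (\<Sum>z\<in>?W. y z) \<le> (card ?N1 + (\<Sum>v\<in>?R1. card (nbrs E v))) * y u"
    using inner outer by (simp add: algebra_simps)
  also have "\<dots> \<le> 2 * (real (num_edges E) - card (nbrs E u)) * y u"
  proof -
    have "card ?N1 + (\<Sum>v\<in>?R1. card (nbrs E v)) + 2 * card (nbrs E u) \<le> 2 * num_edges E"
      using card_sharing_nbr_le_card_darts_avoiding[OF sg, of u] card_darts_avoiding_le[OF sg, of u]
      by linarith
    then have "real (card ?N1 + (\<Sum>v\<in>?R1. card (nbrs E v)) + 2 * card (nbrs E u)) \<le> real (2 * num_edges E)"
      by (rule of_nat_mono)
    then have "real (card ?N1 + (\<Sum>v\<in>?R1. card (nbrs E v))) \<le> 2 * (real (num_edges E) - card (nbrs E u))"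
      by simp
    then show ?thesis
      using y_nonneg[of u] by (intro mult_right_mono) auto
  qed
  finally show ?thesis .
qed

lemma C4_free_subeigenvector_bound:
  fixes E :: "'a::finite \<Rightarrow> 'a \<Rightarrow> bool" and y :: "'a \<Rightarrow> real"
  assumes sg: "simple_graph E" and nc: "\<not> contains_C4 E"
    and y_nonneg: "\<And>v. 0 \<le> y v" and y_max: "\<And>v. y v \<le> y u" and "0 < y u"
    and sub_eigen: "\<And>v. L * y v \<le> (\<Sum>w\<in>nbrs E v. y w)" and "1 \<le> L"
  shows "(L - 1) * (L^2 - card (nbrs E u)) \<le> 2 * (real (num_edges E) - card (nbrs E u))"
proof -
  let ?S = "\<Sum>z\<in>sharing_nbr E u. y z"
  have "L * (L * y u) \<le> L * (\<Sum>v\<in>nbrs E u. y v)"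
    using sub_eigen \<open>1 \<le> L\<close> by (intro mult_left_mono) auto
  also have "\<dots> \<le> (\<Sum>v\<in>nbrs E u. \<Sum>z\<in>nbrs E v. y z)"
    by (simp add: sum_distrib_left sum_mono sub_eigen)
  also have "\<dots> \<le> card (nbrs E u) * y u + ?S"
    by (intro sum_nbrs_sums_le sg nc y_nonneg) auto
  finally have "(L^2 - card (nbrs E u)) * y u \<le> ?S"
    by (simp add: power2_eq_square algebra_simps)
  then have "(L - 1) * ((L^2 - card (nbrs E u)) * y u) \<le> (L - 1) * ?S"
    using \<open>1 \<le> L\<close> by (intro mult_left_mono) auto
  also have "\<dots> \<le> 2 * (real (num_edges E) - card (nbrs E u)) * y u"
    by (rule sum_sharing_nbr_le[OF sg nc y_nonneg y_max sub_eigen])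
  finally show ?thesis
    using \<open>0 < y u\<close> by (simp add: mult.assoc)
qed

lemma C4_free_eigenvalue_bound:
  fixes E :: "'a::finite \<Rightarrow> 'a \<Rightarrow> bool"
  assumes sg: "simple_graph E" and nc: "\<not> contains_C4 E"
    and "is_eigenvalue (adj_matrix E) L" and "1 \<le> L"
  obtains u where "(L - 1) * (L^2 - card (nbrs E u)) \<le> 2 * (real (num_edges E) - card (nbrs E u))"
proof -
  obtain x where "x \<noteq> 0" and x: "adj_matrix E *v x = L *\<^sub>R x"
    using assms(3) unfolding is_eigenvalue_def by blast
  define y where "y v = \<bar>x $ v\<bar>" for v
  have "Max (range y) \<in> range y"
    by (intro Max_in) auto
  then obtain u where "y u = Max (range y)"
    by (metis rangeE)
  then have y_max: "y v \<le> y u" for v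
    by simp
  obtain v where "x $ v \<noteq> 0"
    using \<open>x \<noteq> 0\<close> by (auto simp: vec_eq_iff)
  then have pos: "0 < y u"
    using y_max[of v] by (simp add: y_def)
  have sub_eigen: "L * y v \<le> (\<Sum>w\<in>nbrs E v. y w)" for v
    unfolding y_def using eigenvector_abs_le_nbrs_sum[OF x] \<open>1 \<le> L\<close> by simp
  have y_nonneg: "0 \<le> y v" for v
    by (simp add: y_def)
  show thesis
    by (rule that, rule C4_free_subeigenvector_bound[OF sg nc, of y u L])
      (use y_nonneg y_max pos sub_eigen \<open>1 \<le> L\<close> in auto)
qed

lemma cubic_eigenvalue_bound:
  fixes L d m k :: real
  assumes bound: "(L - 1) * (L^2 - d) \<le> 2 * (m - d)" and "m - k \<le> L^2"
    and "d + k + 1 \<le> m" and "0 \<le> k" and "1 \<le> L"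
  shows "L \<le> 2 * k + 3"
proof (cases "L \<le> 3")
  case False
  have "(L - 1) * ((m - d) - k) \<le> (L - 1) * (L^2 - d)"
    using assms by (intro mult_left_mono) auto
  with bound have "(L - 3) * (m - d) \<le> (L - 1) * k"
    by (simp add: algebra_simps)
  moreover have "(L - 3) * (k + 1) \<le> (L - 3) * (m - d)"
    using False assms by (intro mult_left_mono) auto
  ultimately have "(L - 3) * (k + 1) \<le> (L - 1) * k" by linarith
  then show ?thesis by (simp add: algebra_simps)
qed (use \<open>0 \<le> k\<close> in linarith)

lemma sqrt_diff_le_imp_bounds:
  fixes L m k :: real
  assumes "(2 * k + 3)^2 + k + 1 \<le> m" and sqrt_le: "sqrt (m - k) \<le> L"
  shows "2 * k + 3 < L" and "m - k \<le> L^2"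
proof -
  have "(2 * k + 3)^2 < m - k"
    using assms(1) by linarith
  moreover have "0 \<le> m - k"
    using calculation zero_le_power2[of "2 * k + 3"] by linarith
  ultimately have "0 \<le> L" and "m - k \<le> L^2"
    using sqrt_le power_mono[OF sqrt_le, of 2] real_sqrt_ge_zero[of "m - k"] by (linarith, simp)
  then show "m - k \<le> L^2" and "2 * k + 3 < L"
    using \<open>(2 * k + 3)^2 < m - k\<close> power_less_imp_less_base[of "2 * k + 3" 2 L] by simp_all
qed

theorem theorem1p4:
  fixes E :: "'a::finite \<Rightarrow> 'a \<Rightarrow> bool" and k m :: nat
  assumes "simple_graph E"
    and "m = num_edges E"
    and "m \<ge> max ((k^2 + 2*k + 2)^2 + k + 1) ((2*k + 3)^2 + k + 1)"
    and "spectral_radius_graph E \<ge> sqrt (real m - real k)"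
  shows "contains_star E (m - k) \<or> contains_C4 E"
proof (rule ccontr)
  assume "\<not> (contains_star E (m - k) \<or> contains_C4 E)"
  then have no_star: "\<not> contains_star E (m - k)" and nc: "\<not> contains_C4 E" by auto
  define L where "L = spectral_radius_graph E"
  have "real ((2 * k + 3)^2 + k + 1) \<le> real m"
    using assms(3) by (intro of_nat_mono) simp
  then have "2 * k + 3 < L" and L_sq: "real m - real k \<le> L^2"
    using sqrt_diff_le_imp_bounds[of "real k" "real m" L] assms(4) by (simp_all add: L_def)
  then obtain u where bound: "(L - 1) * (L^2 - card (nbrs E u)) \<le> 2 * (real m - card (nbrs E u))"
    using C4_free_eigenvalue_bound[OF assms(1) nc] spectral_radius_graph_is_eigenvalue[OF assms(1)]
    unfolding L_def assms(2) by fastforce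
  have "real (card (nbrs E u) + k + 1) \<le> real m"
    using card_nbrs_lt_if_no_star[OF assms(1) no_star, of u] by (intro of_nat_mono) linarith
  then have "L \<le> 2 * k + 3"
    using cubic_eigenvalue_bound[OF bound L_sq] \<open>2 * k + 3 < L\<close> by simp
  with \<open>2 * k + 3 < L\<close> show False by simp
qed

end
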